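(* Let $\mathsf L$ be an intermediate logic with $\mathsf{ND}\subseteq\mathsf L$, and let $\phi$ be a consistent formula. The following are equivalent: (i) $\vdash_{\mathsf L^\neg}\phi\leftrightarrow\neg\neg\phi$; (ii) $\phi$ is $\mathcal{ST}$-projective in $\mathsf L^\neg$, where $\mathcal{ST}$ is the class of all substitutions stable in $\mathsf L^\neg$.
   Context: Formulas are built from propositional variables, $\bot,\top$ with $\wedge,\vee,\to$; $\neg\phi:=\phi\to\bot$. An intermediate theory is a set $\mathsf T$ of formulas closed under modus ponens with $\mathsf{IPC}\subseteq\mathsf T\subseteq\mathsf{CPC}$; an intermediate logic is an intermediate theory closed under uniform substitution. $\Gamma\vdash_{\mathsf T}\phi$ means $\phi$ is derivable from $\Gamma\cup\mathsf T$ by modus ponens; $\vdash_{\mathsf T}\phi$ means $\phi\in\mathsf T$. $\mathsf{ND}$ is the intermediate logic axiomatized over $\mathsf{IPC}$ by all substitution instances of $(\neg p\to\bigvee_{i=1}^k\neg q_i)\to\bigvee_{i=1}^k(\neg p\to\neg q_i)$ for $k\ge1$. For an intermediate logic $\mathsf L$, $\phi^\neg$ is obtained by replacing each propositional variable $p$ in $\phi$ by $\neg p$, and $\mathsf L^\neg=\{\phi\mid\phi^\neg\in\mathsf L\}$. A substitution is a map on formulas commuting with connectives and constants; it is stable in $\mathsf L^\neg$ if $\vdash_{\mathsf L^\neg}\sigma(p)\leftrightarrow\neg\neg\sigma(p)$ for all variables $p$. $\phi$ is consistent if $\phi\nvdash_{\mathsf L^\neg}\bot$. For a set $\mathcal S$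 of substitutions, $\phi$ is $\mathcal S$-projective in $\mathsf L^\neg$ if there is $\sigma\in\mathcal S$ with $\vdash_{\mathsf L^\neg}\sigma(\phi)$, and $\phi,\sigma(p)\vdash_{\mathsf L^\neg}p$ and $\phi,p\vdash_{\mathsf L^\neg}\sigma(p)$ for all variables $p$. *)

theory Defs
  imports Main
begin

datatype form = Var nat | Bot | Top | And form form | Or form form | Imp form form

definition Neg :: "form \<Rightarrow> form" where
  "Neg A = Imp A Bot"

definition Iff :: "form \<Rightarrow> form \<Rightarrow> form" where
  "Iff A B = And (Imp A B) (Imp B A)"

fun bigor :: "form list \<Rightarrow> form" where
  "bigor [] = Bot"
| "bigor [A] = A"
| "bigor (A # As) = Or A (bigor As)"

fun subst :: "(nat \<Rightarrow> form) \<Rightarrow> form \<Rightarrow> form" where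
  "subst s (Var p) = s p"
| "subst s Bot = Bot"
| "subst s Top = Top"
| "subst s (And A B) = And (subst s A) (subst s B)"
| "subst s (Or A B) = Or (subst s A) (subst s B)"
| "subst s (Imp A B) = Imp (subst s A) (subst s B)"

inductive ipc_axiom :: "form \<Rightarrow> bool" where
  "ipc_axiom (Imp A (Imp B A))"
| "ipc_axiom (Imp (Imp A (Imp B C)) (Imp (Imp A B) (Imp A C)))"
| "ipc_axiom (Imp (And A B) A)"
| "ipc_axiom (Imp (And A B) B)"
| "ipc_axiom (Imp A (Imp B (And A B)))"
| "ipc_axiom (Imp A (Or A B))"
| "ipc_axiom (Imp B (Or A B))"
| "ipc_axiom (Imp (Imp A C) (Imp (Imp B C) (Imp (Or A B) C)))"
| "ipc_axiom (Imp Bot A)"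
| "ipc_axiom Top"

inductive_set IPC :: "form set" where
  ax: "ipc_axiom A \<Longrightarrow> A \<in> IPC"
| mp: "Imp A B \<in> IPC \<Longrightarrow> A \<in> IPC \<Longrightarrow> B \<in> IPC"

fun eval :: "(nat \<Rightarrow> bool) \<Rightarrow> form \<Rightarrow> bool" where
  "eval v (Var p) = v p"
| "eval v Bot = False"
| "eval v Top = True"
| "eval v (And A B) = (eval v A \<and> eval v B)"
| "eval v (Or A B) = (eval v A \<or> eval v B)"
| "eval v (Imp A B) = (eval v A \<longrightarrow> eval v B)"

definition CPC :: "form set" where
  "CPC = {A. \<forall>v. eval v A}"

definition mp_closed :: "form set \<Rightarrow> bool" where
  "mp_closed T \<longleftrightarrow> (\<forall>A B. Imp A B \<in> T \<longrightarrow> A \<in> T \<longrightarrow> B \<in> T)"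

definition intermediate_theory :: "form set \<Rightarrow> bool" where
  "intermediate_theory T \<longleftrightarrow> mp_closed T \<and> IPC \<subseteq> T \<and> T \<subseteq> CPC"

definition intermediate_logic :: "form set \<Rightarrow> bool" where
  "intermediate_logic L \<longleftrightarrow> intermediate_theory L \<and> (\<forall>s A. A \<in> L \<longrightarrow> subst s A \<in> L)"

inductive derives :: "form set \<Rightarrow> form set \<Rightarrow> form \<Rightarrow> bool" where
  hyp: "A \<in> \<Gamma> \<union> T \<Longrightarrow> derives T \<Gamma> A"
| mp: "derives T \<Gamma> (Imp A B) \<Longrightarrow> derives T \<Gamma> A \<Longrightarrow> derives T \<Gamma> B"

definition nd_axiom :: "form \<Rightarrow> bool" where
  "nd_axiom F \<longleftrightarrow> (\<exists>A Bs. Bs \<noteq> [] \<and>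
     F = Imp (Imp (Neg A) (bigor (map Neg Bs)))
             (bigor (map (\<lambda>B. Imp (Neg A) (Neg B)) Bs)))"

text \<open>ND: axiomatized over IPC by all substitution instances of the ND axioms
  (the set of instances is closed under substitution already).\<close>
inductive_set ND :: "form set" where
  ipc: "A \<in> IPC \<Longrightarrow> A \<in> ND"
| ax: "nd_axiom A \<Longrightarrow> A \<in> ND"
| mp: "Imp A B \<in> ND \<Longrightarrow> A \<in> ND \<Longrightarrow> B \<in> ND"

definition negvars :: "form \<Rightarrow> form" where
  "negvars A = subst (\<lambda>p. Neg (Var p)) A"

definition Lneg :: "form set \<Rightarrow> form set" where
  "Lneg L = {A. negvars A \<in> L}"

definition stable :: "form set \<Rightarrow> (nat \<Rightarrow> form) \<Rightarrow> bool" where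
  "stable T s \<longleftrightarrow> (\<forall>p. Iff (s p) (Neg (Neg (s p))) \<in> T)"

definition consistent :: "form set \<Rightarrow> form \<Rightarrow> bool" where
  "consistent T A \<longleftrightarrow> \<not> derives T {A} Bot"

definition projective :: "form set \<Rightarrow> (nat \<Rightarrow> form) set \<Rightarrow> form \<Rightarrow> bool" where
  "projective T S A \<longleftrightarrow> (\<exists>s\<in>S. subst s A \<in> T \<and>
      (\<forall>p. derives T {A, s p} (Var p) \<and> derives T {A, Var p} (s p)))"

end

theory Submission
  imports Defs
begin

text \<open>
  A consistent \<open>\<phi>\<close> has a classical model \<open>v\<close>: otherwise, by Kalmar's lemma, the
  literals of every valuation refute \<open>\<phi>\<close>, and eliminating the variables one at a time
  gives \<open>\<phi> \<turnstile> \<bottom>\<close>. The substitution \<open>\<sigma>(p) = \<phi> \<rightarrow> p\<close> if \<open>v(p)\<close> and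
  \<open>\<sigma>(p) = \<phi> \<and> p\<close> otherwise is the identity modulo \<open>\<phi>\<close> and evaluates \<open>\<phi>\<close> along \<open>v\<close>
  modulo \<open>\<not>\<phi>\<close>, so both \<open>\<phi>\<close> and \<open>\<not>\<phi>\<close> derive \<open>\<sigma>(\<phi>)\<close> and \<open>\<not>\<not>\<sigma>(\<phi>)\<close> is
  provable. In \<open>L\<^sup>\<not>\<close> variables are stable and stable formulas are closed under \<open>\<and>\<close>
  and under \<open>\<rightarrow>\<close> with stable consequent, so \<open>\<sigma>\<close> is stable; since \<open>L\<^sup>\<not>\<close> is closed under
  stable substitutions, a stable \<open>\<phi>\<close> has a stable \<open>\<sigma>(\<phi>)\<close>, which is therefore provable.
  Conversely, if \<open>\<sigma>\<close> is stable and projective for \<open>\<phi>\<close>, then modulo \<open>\<not>\<not>\<phi>\<close> the stability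
  of \<open>p\<close> and of \<open>\<sigma>(p)\<close> turns the projectivity derivations into \<open>\<sigma>(p) \<leftrightarrow> p\<close>, hence
  \<open>\<not>\<not>\<phi> \<turnstile> \<sigma>(\<phi>) \<leftrightarrow> \<phi>\<close> and \<open>\<not>\<not>\<phi> \<turnstile> \<phi>\<close>.
\<close>

lemma subst_Var_id [simp]: "subst Var A = A"
  by (induction A) auto

lemma subst_subst: "subst s (subst t A) = subst (\<lambda>p. subst s (t p)) A"
  by (induction A) auto

lemma subst_Neg [simp]: "subst s (Neg A) = Neg (subst s A)"
  by (simp add: Neg_def)

lemma subst_Iff [simp]: "subst s (Iff A B) = Iff (subst s A) (subst s B)"
  by (simp add: Iff_def)

lemma negvars_subst: "negvars (subst s A) = subst (\<lambda>p. negvars (s p)) A"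
  unfolding negvars_def by (simp add: subst_subst)

fun vars :: "form \<Rightarrow> nat set" where
  "vars (Var p) = {p}"
| "vars Bot = {}"
| "vars Top = {}"
| "vars (And A B) = vars A \<union> vars B"
| "vars (Or A B) = vars A \<union> vars B"
| "vars (Imp A B) = vars A \<union> vars B"

lemma finite_vars: "finite (vars A)"
  by (induction A) auto

locale ipc_theory =
  fixes T :: "form set"
  assumes IPC_subset: "IPC \<subseteq> T" and mp_closed: "mp_closed T"
begin

abbreviation der :: "form set \<Rightarrow> form \<Rightarrow> bool" (infix "\<turnstile>" 50) where
  "\<Gamma> \<turnstile> A \<equiv> derives T \<Gamma> A"

lemma der_hyp: "A \<in> \<Gamma> \<Longrightarrow> \<Gamma> \<turnstile> A"
  by (simp add: derives.hyp)

lemma der_hyp_insert: "insert A \<Gamma> \<turnstile> A"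
  by (simp add: der_hyp)

lemma der_theory: "A \<in> T \<Longrightarrow> \<Gamma> \<turnstile> A"
  by (simp add: derives.hyp)

lemma der_axiom: "ipc_axiom A \<Longrightarrow> \<Gamma> \<turnstile> A"
  using IPC_subset by (auto intro: der_theory IPC.ax)

lemma der_mono: "\<Gamma> \<turnstile> A \<Longrightarrow> \<Gamma> \<subseteq> \<Delta> \<Longrightarrow> \<Delta> \<turnstile> A"
  by (induction rule: derives.induct) (auto intro: derives.intros)

lemma der_weaken: "\<Gamma> \<turnstile> A \<Longrightarrow> insert B \<Gamma> \<turnstile> A"
  by (erule der_mono) auto

lemma der_impE: "\<Gamma> \<turnstile> Imp A B \<Longrightarrow> \<Gamma> \<turnstile> A \<Longrightarrow> \<Gamma> \<turnstile> B"
  by (rule derives.mp)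

lemma der_induct [consumes 1, case_names hyp mp]:
  assumes "\<Gamma> \<turnstile> A"
    and "\<And>A. A \<in> \<Gamma> \<union> T \<Longrightarrow> P A"
    and "\<And>A B. \<Gamma> \<turnstile> Imp A B \<Longrightarrow> P (Imp A B) \<Longrightarrow> \<Gamma> \<turnstile> A \<Longrightarrow> P A \<Longrightarrow> P B"
  shows "P A"
proof -
  have "derives T' \<Gamma>' A \<Longrightarrow> T' = T \<Longrightarrow> \<Gamma>' = \<Gamma> \<Longrightarrow> P A" for T' \<Gamma>'
    by (induction rule: derives.induct) (use assms(2,3) in blast)+
  with assms(1) show ?thesis by blast
qed

lemma der_Imp_self: "\<Gamma> \<turnstile> Imp A A"
  using der_axiom[OF ipc_axiom.intros(2), of \<Gamma> A "Imp A A" A]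
    der_axiom[OF ipc_axiom.intros(1), of \<Gamma> A "Imp A A"]
    der_axiom[OF ipc_axiom.intros(1), of \<Gamma> A A]
  by (blast intro: der_impE)

theorem deduction: "insert A \<Gamma> \<turnstile> B \<Longrightarrow> \<Gamma> \<turnstile> Imp A B"
proof (induction rule: der_induct)
  case (hyp B)
  show ?case
  proof (cases "B = A")
    case False
    with hyp have "\<Gamma> \<turnstile> B" by (auto intro: derives.hyp)
    then show ?thesis by (blast intro: der_impE der_axiom ipc_axiom.intros(1))
  qed (simp add: der_Imp_self)
next
  case (mp C B)
  then show ?case by (blast intro: der_impE der_axiom ipc_axiom.intros(2))
qed

lemma der_empty_iff: "{} \<turnstile> A \<longleftrightarrow> A \<in> T"
proof
  show "{} \<turnstile> A \<Longrightarrow> A \<in> T"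
    by (induction rule: der_induct)
       (use mp_closed in \<open>auto simp: mp_closed_def\<close>)
qed (rule der_theory)

lemma der_andI: "\<Gamma> \<turnstile> A \<Longrightarrow> \<Gamma> \<turnstile> B \<Longrightarrow> \<Gamma> \<turnstile> And A B"
  using der_axiom[OF ipc_axiom.intros(5)] der_impE by blast

lemma der_andD1: "\<Gamma> \<turnstile> And A B \<Longrightarrow> \<Gamma> \<turnstile> A"
  using der_axiom[OF ipc_axiom.intros(3)] der_impE by blast

lemma der_andD2: "\<Gamma> \<turnstile> And A B \<Longrightarrow> \<Gamma> \<turnstile> B"
  using der_axiom[OF ipc_axiom.intros(4)] der_impE by blast

lemma der_orI1: "\<Gamma> \<turnstile> A \<Longrightarrow> \<Gamma> \<turnstile> Or A B"
  using der_axiom[OF ipc_axiom.intros(6)] der_impE by blast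

lemma der_orI2: "\<Gamma> \<turnstile> B \<Longrightarrow> \<Gamma> \<turnstile> Or A B"
  using der_axiom[OF ipc_axiom.intros(7)] der_impE by blast

lemma der_orE: "\<Gamma> \<turnstile> Or A B \<Longrightarrow> insert A \<Gamma> \<turnstile> C \<Longrightarrow> insert B \<Gamma> \<turnstile> C \<Longrightarrow> \<Gamma> \<turnstile> C"
  using der_axiom[OF ipc_axiom.intros(8)] der_impE deduction by metis

lemma der_BotE: "\<Gamma> \<turnstile> Bot \<Longrightarrow> \<Gamma> \<turnstile> A"
  using der_axiom[OF ipc_axiom.intros(9)] der_impE by blast

lemma der_Top: "\<Gamma> \<turnstile> Top"
  using der_axiom[OF ipc_axiom.intros(10)] .

lemma der_NegI: "insert A \<Gamma> \<turnstile> Bot \<Longrightarrow> \<Gamma> \<turnstile> Neg A"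
  unfolding Neg_def by (rule deduction)

lemma der_NegE: "\<Gamma> \<turnstile> Neg A \<Longrightarrow> \<Gamma> \<turnstile> A \<Longrightarrow> \<Gamma> \<turnstile> Bot"
  unfolding Neg_def by (rule der_impE)

lemma der_IffI: "insert A \<Gamma> \<turnstile> B \<Longrightarrow> insert B \<Gamma> \<turnstile> A \<Longrightarrow> \<Gamma> \<turnstile> Iff A B"
  unfolding Iff_def by (intro der_andI deduction)

lemma der_IffD1: "\<Gamma> \<turnstile> Iff A B \<Longrightarrow> \<Gamma> \<turnstile> A \<Longrightarrow> \<Gamma> \<turnstile> B"
  unfolding Iff_def using der_andD1 der_impE by blast

lemma der_IffD2: "\<Gamma> \<turnstile> Iff A B \<Longrightarrow> \<Gamma> \<turnstile> B \<Longrightarrow> \<Gamma> \<turnstile> A"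
  unfolding Iff_def using der_andD2 der_impE by blast

lemma der_Iff_refl: "\<Gamma> \<turnstile> Iff A A"
  by (intro der_IffI der_hyp_insert)

lemma der_Iff_And:
  assumes A: "\<Gamma> \<turnstile> Iff A A'" and B: "\<Gamma> \<turnstile> Iff B B'"
  shows "\<Gamma> \<turnstile> Iff (And A B) (And A' B')"
proof (rule der_IffI)
  note A' = der_weaken[OF A] and B' = der_weaken[OF B]
  show "insert (And A B) \<Gamma> \<turnstile> And A' B'"
    using der_andD1[OF der_hyp_insert] der_andD2[OF der_hyp_insert]
    by (intro der_andI der_IffD1[OF A'] der_IffD1[OF B'])
  show "insert (And A' B') \<Gamma> \<turnstile> And A B"
    using der_andD1[OF der_hyp_insert] der_andD2[OF der_hyp_insert]
    by (intro der_andI der_IffD2[OF A'] der_IffD2[OF B'])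
qed

lemma der_Iff_Or:
  assumes A: "\<Gamma> \<turnstile> Iff A A'" and B: "\<Gamma> \<turnstile> Iff B B'"
  shows "\<Gamma> \<turnstile> Iff (Or A B) (Or A' B')"
proof (rule der_IffI)
  note A' = der_weaken[OF der_weaken[OF A]] and B' = der_weaken[OF der_weaken[OF B]]
  show "insert (Or A B) \<Gamma> \<turnstile> Or A' B'"
    by (rule der_orE[OF der_hyp_insert])
      (rule der_orI1 der_orI2, rule der_IffD1[OF A'] der_IffD1[OF B'], rule der_hyp_insert)+
  show "insert (Or A' B') \<Gamma> \<turnstile> Or A B"
    by (rule der_orE[OF der_hyp_insert])
      (rule der_orI1 der_orI2, rule der_IffD2[OF A'] der_IffD2[OF B'], rule der_hyp_insert)+
qed

lemma der_Iff_Imp: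
  assumes A: "\<Gamma> \<turnstile> Iff A A'" and B: "\<Gamma> \<turnstile> Iff B B'"
  shows "\<Gamma> \<turnstile> Iff (Imp A B) (Imp A' B')"
proof (rule der_IffI; rule deduction)
  note A' = der_weaken[OF der_weaken[OF A]] and B' = der_weaken[OF der_weaken[OF B]]
  show "insert A' (insert (Imp A B) \<Gamma>) \<turnstile> B'"
    by (rule der_IffD1[OF B' der_impE[OF der_hyp der_IffD2[OF A' der_hyp_insert]]]) simp
  show "insert A (insert (Imp A' B') \<Gamma>) \<turnstile> B"
    by (rule der_IffD2[OF B' der_impE[OF der_hyp der_IffD1[OF A' der_hyp_insert]]]) simp
qed

lemma der_Iff_subst:
  "(\<And>p. \<Gamma> \<turnstile> Iff (f p) (g p)) \<Longrightarrow> \<Gamma> \<turnstile> Iff (subst f A) (subst g A)"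
  by (induction A) (simp_all add: der_Iff_refl der_Iff_And der_Iff_Or der_Iff_Imp)

lemma der_Iff_subst_Var:
  assumes "\<And>p. {A, s p} \<turnstile> Var p" and "\<And>p. {A, Var p} \<turnstile> s p"
  shows "{A} \<turnstile> Iff (subst s B) B"
proof -
  have "{A} \<turnstile> Iff (s p) (Var p)" for p
    using assms by (intro der_IffI) (simp_all add: insert_commute)
  then show ?thesis
    using der_Iff_subst[of "{A}" s Var B] by simp
qed

end

definition lit :: "bool \<Rightarrow> form \<Rightarrow> form" where
  "lit b A = (if b then A else Neg A)"

definition lits :: "(nat \<Rightarrow> bool) \<Rightarrow> nat set \<Rightarrow> form set" where
  "lits v S = (\<lambda>p. lit (v p) (Var p)) ` S"

context ipc_theory
begin

lemma der_lit_And: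
  assumes A: "\<Gamma> \<turnstile> lit a A" and B: "\<Gamma> \<turnstile> lit b B"
  shows "\<Gamma> \<turnstile> lit (a \<and> b) (And A B)"
proof (cases "a \<and> b")
  case True
  with A B show ?thesis by (simp add: lit_def der_andI)
next
  case False
  have "insert (And A B) \<Gamma> \<turnstile> Bot"
  proof (cases a)
    case True
    with False B have "\<Gamma> \<turnstile> Neg B" by (simp add: lit_def)
    then show ?thesis by (rule der_NegE[OF der_weaken der_andD2[OF der_hyp_insert]])
  next
    case False
    with A have "\<Gamma> \<turnstile> Neg A" by (simp add: lit_def)
    then show ?thesis by (rule der_NegE[OF der_weaken der_andD1[OF der_hyp_insert]])
  qed
  then show ?thesis unfolding lit_def if_not_P[OF False] by (rule der_NegI)
qed

lemma der_lit_Or: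
  assumes A: "\<Gamma> \<turnstile> lit a A" and B: "\<Gamma> \<turnstile> lit b B"
  shows "\<Gamma> \<turnstile> lit (a \<or> b) (Or A B)"
proof (cases "a \<or> b")
  case True
  with A B show ?thesis by (auto simp: lit_def der_orI1 der_orI2)
next
  case False
  with A B have nA: "\<Gamma> \<turnstile> Neg A" and nB: "\<Gamma> \<turnstile> Neg B" by (simp_all add: lit_def)
  have "insert (Or A B) \<Gamma> \<turnstile> Bot"
  proof (rule der_orE[OF der_hyp_insert])
    show "insert A (insert (Or A B) \<Gamma>) \<turnstile> Bot"
      using der_weaken[OF der_weaken[OF nA]] by (rule der_NegE) (rule der_hyp_insert)
    show "insert B (insert (Or A B) \<Gamma>) \<turnstile> Bot"
      using der_weaken[OF der_weaken[OF nB]] by (rule der_NegE) (rule der_hyp_insert)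
  qed
  then show ?thesis unfolding lit_def if_not_P[OF False] by (rule der_NegI)
qed

lemma der_lit_Imp:
  assumes A: "\<Gamma> \<turnstile> lit a A" and B: "\<Gamma> \<turnstile> lit b B"
  shows "\<Gamma> \<turnstile> lit (a \<longrightarrow> b) (Imp A B)"
proof (cases "a \<longrightarrow> b")
  case True
  have "insert A \<Gamma> \<turnstile> B"
  proof (cases b)
    case True
    with B show ?thesis by (simp add: lit_def der_weaken)
  next
    case False
    with \<open>a \<longrightarrow> b\<close> A have "\<Gamma> \<turnstile> Neg A" by (simp add: lit_def)
    then show ?thesis by (rule der_BotE[OF der_NegE[OF der_weaken der_hyp_insert]])
  qed
  then show ?thesis unfolding lit_def if_P[OF True] by (rule deduction)
next
  case False
  with A B have "\<Gamma> \<turnstile> A" "\<Gamma> \<turnstile> Neg B" by (simp_all add: lit_def)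
  then have "insert (Imp A B) \<Gamma> \<turnstile> Bot"
    by (meson der_NegE der_impE der_hyp_insert der_weaken)
  then show ?thesis unfolding lit_def if_not_P[OF False] by (rule der_NegI)
qed

lemma der_lit_eval:
  "(\<And>p. p \<in> vars A \<Longrightarrow> \<Gamma> \<turnstile> lit (v p) (s p)) \<Longrightarrow> \<Gamma> \<turnstile> lit (eval v A) (subst s A)"
proof (induction A)
  case Bot
  show ?case unfolding lit_def by (simp add: der_NegI der_hyp_insert)
next
  case Top
  show ?case unfolding lit_def by (simp add: der_Top)
qed (simp_all add: der_lit_And der_lit_Or der_lit_Imp)

lemma der_Bot_from_lits:
  "finite S \<Longrightarrow> (\<And>v. \<Delta> \<union> lits v S \<turnstile> Bot) \<Longrightarrow> \<Delta> \<turnstile> Bot"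
proof (induction S rule: finite_induct)
  case empty
  then show ?case by (simp add: lits_def)
next
  case (insert p S)
  have "\<Delta> \<union> lits v S \<turnstile> Bot" for v
  proof -
    have "\<Delta> \<union> lits (v(p := b)) (insert p S) = insert (lit b (Var p)) (\<Delta> \<union> lits v S)" for b
      unfolding lits_def using insert.hyps(2) by (auto intro: image_cong)
    then have "insert (lit b (Var p)) (\<Delta> \<union> lits v S) \<turnstile> Bot" for b
      using insert.prems[of "v(p := b)"] by metis
    from this[of True] this[of False] show ?thesis
      unfolding lit_def by (auto intro: der_NegE der_NegI)
  qed
  then show ?case by (rule insert.IH)
qed

lemma consistent_imp_satisfiable:
  assumes "consistent T A"
  shows "\<exists>v. eval v A"
proof (rule ccontr)
  assume "\<nexists>v. eval v A"
  have "{A} \<union> lits v (vars A) \<turnstile> Bot" for v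
  proof -
    have "insert A (lits v (vars A)) \<turnstile> lit (eval v A) (subst Var A)"
      by (rule der_lit_eval) (simp add: lits_def der_hyp)
    with \<open>\<nexists>v. eval v A\<close> show ?thesis
      unfolding lit_def by (simp add: der_NegE der_hyp_insert)
  qed
  then have "{A} \<turnstile> Bot" by (rule der_Bot_from_lits[OF finite_vars])
  with assms show False by (simp add: consistent_def)
qed

lemma der_NegNegI: "\<Gamma> \<turnstile> A \<Longrightarrow> \<Gamma> \<turnstile> Neg (Neg A)"
  by (intro der_NegI) (auto intro: der_NegE der_hyp der_weaken)

lemma der_NegNeg_mono:
  assumes "\<Gamma> \<turnstile> Neg (Neg A)" and "insert A \<Gamma> \<turnstile> B"
  shows "\<Gamma> \<turnstile> Neg (Neg B)"
proof (rule der_NegI)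
  have "insert A (insert (Neg B) \<Gamma>) \<turnstile> B"
    using assms(2) by (rule der_mono) auto
  then have "insert (Neg B) \<Gamma> \<turnstile> Neg A"
    by (intro der_NegI der_NegE[OF der_hyp]) auto
  then show "insert (Neg B) \<Gamma> \<turnstile> Bot"
    using der_weaken[OF assms(1)] by (rule der_NegE[rotated])
qed

lemma der_NegNeg_by_cases:
  assumes "insert A \<Gamma> \<turnstile> B" and "insert (Neg A) \<Gamma> \<turnstile> B"
  shows "\<Gamma> \<turnstile> Neg (Neg B)"
proof (rule der_NegI)
  have "insert A (insert (Neg B) \<Gamma>) \<turnstile> Bot" "insert (Neg A) (insert (Neg B) \<Gamma>) \<turnstile> Bot"
    using assms by (auto intro: der_NegE[OF der_hyp] der_mono)
  then show "insert (Neg B) \<Gamma> \<turnstile> Bot"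
    by (blast intro: der_NegE der_NegI)
qed

lemma der_Iff_Neg_NegNegNeg: "\<Gamma> \<turnstile> Iff (Neg A) (Neg (Neg (Neg A)))"
proof (rule der_IffI)
  show "insert (Neg A) \<Gamma> \<turnstile> Neg (Neg (Neg A))"
    by (rule der_NegNegI der_hyp_insert)+
  have "insert A (insert (Neg (Neg (Neg A))) \<Gamma>) \<turnstile> Bot"
    by (rule der_NegE[OF der_hyp der_NegNegI[OF der_hyp_insert]]) simp
  then show "insert (Neg (Neg (Neg A))) \<Gamma> \<turnstile> Neg A"
    by (rule der_NegI)
qed

lemma der_stableD: "Iff A (Neg (Neg A)) \<in> T \<Longrightarrow> \<Gamma> \<turnstile> Neg (Neg A) \<Longrightarrow> \<Gamma> \<turnstile> A"
  by (rule der_IffD2[OF der_theory])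

lemma der_NegNeg_stableE:
  "Iff B (Neg (Neg B)) \<in> T \<Longrightarrow> \<Gamma> \<turnstile> Neg (Neg A) \<Longrightarrow> insert A \<Gamma> \<turnstile> B \<Longrightarrow> \<Gamma> \<turnstile> B"
  by (blast intro: der_stableD der_NegNeg_mono)

lemma stable_formI: "{Neg (Neg A)} \<turnstile> A \<Longrightarrow> Iff A (Neg (Neg A)) \<in> T"
  unfolding der_empty_iff[symmetric]
  by (intro der_IffI der_NegNegI der_hyp_insert) simp

lemma stable_Imp:
  assumes "Iff B (Neg (Neg B)) \<in> T"
  shows "Iff (Imp A B) (Neg (Neg (Imp A B))) \<in> T"
proof (rule stable_formI, rule deduction)
  show "insert A {Neg (Neg (Imp A B))} \<turnstile> B"
    by (rule der_NegNeg_stableE[OF assms der_hyp der_impE[OF der_hyp_insert der_hyp]]) auto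
qed

lemma stable_And:
  assumes "Iff A (Neg (Neg A)) \<in> T" and "Iff B (Neg (Neg B)) \<in> T"
  shows "Iff (And A B) (Neg (Neg (And A B))) \<in> T"
proof (rule stable_formI, rule der_andI)
  show "{Neg (Neg (And A B))} \<turnstile> A"
    by (rule der_NegNeg_stableE[OF assms(1) der_hyp_insert der_andD1[OF der_hyp_insert]])
  show "{Neg (Neg (And A B))} \<turnstile> B"
    by (rule der_NegNeg_stableE[OF assms(2) der_hyp_insert der_andD2[OF der_hyp_insert]])
qed

end

text \<open>A variant of Loewenheim's substitution for a classical model \<open>v\<close> of \<open>A\<close>: it is
  equivalent to the identity under \<open>A\<close> and to the constant substitution \<open>v\<close> under \<open>\<not>A\<close>.\<close>

definition lowenheim :: "form \<Rightarrow> (nat \<Rightarrow> bool) \<Rightarrow> nat \<Rightarrow> form" where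
  "lowenheim A v p = (if v p then Imp A (Var p) else And A (Var p))"

context ipc_theory
begin

lemma lowenheim_projective:
  "{A, lowenheim A v p} \<turnstile> Var p \<and> {A, Var p} \<turnstile> lowenheim A v p"
proof (cases "v p")
  case True
  have "{A, Imp A (Var p)} \<turnstile> Var p"
    by (rule der_impE[of _ A]; rule der_hyp) auto
  moreover have "{A, Var p} \<turnstile> Imp A (Var p)"
    by (intro deduction der_hyp) auto
  ultimately show ?thesis using True by (simp add: lowenheim_def)
next
  case False
  have "{A, And A (Var p)} \<turnstile> Var p"
    by (rule der_andD2[of _ A], rule der_hyp) auto
  moreover have "{A, Var p} \<turnstile> And A (Var p)"
    by (intro der_andI der_hyp) auto
  ultimately show ?thesis using False by (simp add: lowenheim_def)
qed

lemma der_lit_lowenheim: "{Neg A} \<turnstile> lit (v p) (lowenheim A v p)"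
proof (cases "v p")
  case True
  have "{Neg A} \<turnstile> Imp A (Var p)"
    by (rule deduction, rule der_BotE, rule der_NegE[OF der_hyp der_hyp_insert]) simp
  with True show ?thesis by (simp add: lit_def lowenheim_def)
next
  case False
  have "{Neg A} \<turnstile> Neg (And A (Var p))"
    by (rule der_NegI, rule der_NegE[OF der_hyp der_andD1[OF der_hyp_insert]]) simp
  with False show ?thesis by (simp add: lit_def lowenheim_def)
qed

lemma der_NegNeg_subst_lowenheim:
  assumes "eval v A"
  shows "{} \<turnstile> Neg (Neg (subst (lowenheim A v) A))"
proof (rule der_NegNeg_by_cases)
  have "{A} \<turnstile> Iff (subst (lowenheim A v) A) A"
    using lowenheim_projective by (intro der_Iff_subst_Var) blast+
  then show "{A} \<turnstile> subst (lowenheim A v) A"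
    by (rule der_IffD2) (rule der_hyp_insert)
  have "{Neg A} \<turnstile> lit (eval v A) (subst (lowenheim A v) A)"
    by (rule der_lit_eval) (rule der_lit_lowenheim)
  with assms show "{Neg A} \<turnstile> subst (lowenheim A v) A"
    by (simp add: lit_def)
qed

end

locale negative_theory = ipc_theory +
  assumes Var_stable: "Iff (Var p) (Neg (Neg (Var p))) \<in> T"
    and subst_stable_closed: "A \<in> T \<Longrightarrow> stable T s \<Longrightarrow> subst s A \<in> T"
begin

lemma lowenheim_stable:
  "Iff A (Neg (Neg A)) \<in> T \<Longrightarrow> stable T (lowenheim A v)"
  unfolding stable_def lowenheim_def by (simp add: stable_Imp stable_And Var_stable)

theorem stable_imp_projective:
  assumes "consistent T A" and "Iff A (Neg (Neg A)) \<in> T"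
  shows "projective T {s. stable T s} A"
proof -
  obtain v where "eval v A"
    using consistent_imp_satisfiable[OF assms(1)] by blast
  have "stable T (lowenheim A v)"
    using assms(2) by (rule lowenheim_stable)
  moreover have "subst (lowenheim A v) A \<in> T"
  proof -
    have "Iff (subst (lowenheim A v) A) (Neg (Neg (subst (lowenheim A v) A))) \<in> T"
      using subst_stable_closed[OF assms(2) \<open>stable T (lowenheim A v)\<close>] by simp
    then have "{} \<turnstile> subst (lowenheim A v) A"
      using der_NegNeg_subst_lowenheim[OF \<open>eval v A\<close>] by (rule der_stableD)
    then show ?thesis by (simp add: der_empty_iff)
  qed
  ultimately show ?thesis
    unfolding projective_def using lowenheim_projective by blast
qed

theorem projective_imp_stable:
  assumes "projective T {s. stable T s} A"
  shows "Iff A (Neg (Neg A)) \<in> T"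
proof -
  obtain s where s: "stable T s" "subst s A \<in> T"
    and proj: "\<And>p. {A, s p} \<turnstile> Var p \<and> {A, Var p} \<turnstile> s p"
    using assms unfolding projective_def by blast
  let ?\<Gamma> = "{Neg (Neg A)}"
  have "?\<Gamma> \<turnstile> Iff (s p) (Var p)" for p
  proof (rule der_IffI)
    show "insert (s p) ?\<Gamma> \<turnstile> Var p"
      by (rule der_NegNeg_stableE[OF Var_stable der_hyp der_mono[OF conjunct1[OF proj]]]) auto
    show "insert (Var p) ?\<Gamma> \<turnstile> s p"
      using s(1)[unfolded stable_def, rule_format]
      by (rule der_NegNeg_stableE[OF _ der_hyp der_mono[OF conjunct2[OF proj]]]) auto
  qed
  then have "?\<Gamma> \<turnstile> Iff (subst s A) A"
    using der_Iff_subst[of ?\<Gamma> s Var A] by simp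
  then have "?\<Gamma> \<turnstile> A"
    using s(2) by (blast intro: der_IffD1 der_theory)
  then show ?thesis by (rule stable_formI)
qed

end

lemma intermediate_logic_ipc_theory: "intermediate_logic L \<Longrightarrow> ipc_theory L"
  by unfold_locales (simp_all add: intermediate_logic_def intermediate_theory_def)

lemma Lneg_subst_stable_closed:
  assumes L: "intermediate_logic L" and "A \<in> Lneg L" and "stable (Lneg L) s"
  shows "subst s A \<in> Lneg L"
proof -
  interpret ipc_theory L using L by (rule intermediate_logic_ipc_theory)
  let ?t = "\<lambda>p. negvars (s p)"
  have "subst (\<lambda>p. Neg (?t p)) (negvars A) \<in> L"
    using L \<open>A \<in> Lneg L\<close> by (simp add: intermediate_logic_def Lneg_def)
  then have "derives L {} (subst (\<lambda>p. Neg (Neg (?t p))) A)"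
    by (simp add: negvars_def subst_subst der_theory)
  moreover have "derives L {} (Iff (?t p) (Neg (Neg (?t p))))" for p
    using \<open>stable (Lneg L) s\<close> by (simp add: stable_def Lneg_def negvars_def der_theory)
  ultimately have "derives L {} (subst ?t A)"
    using der_Iff_subst[of "{}" ?t "\<lambda>p. Neg (Neg (?t p))" A] by (blast intro: der_IffD2)
  then show ?thesis by (simp add: Lneg_def negvars_subst der_empty_iff)
qed

lemma Lneg_negative_theory:
  assumes "intermediate_logic L"
  shows "negative_theory (Lneg L)"
proof -
  interpret ipc_theory L using assms by (rule intermediate_logic_ipc_theory)
  show ?thesis
  proof unfold_locales
    show "IPC \<subseteq> Lneg L"
      using assms IPC_subset by (auto simp: intermediate_logic_def Lneg_def negvars_def)
    show "mp_closed (Lneg L)"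
      using mp_closed by (simp add: mp_closed_def Lneg_def negvars_def)
    show "Iff (Var p) (Neg (Neg (Var p))) \<in> Lneg L" for p
      using der_Iff_Neg_NegNegNeg[of "{}" "Var p"] by (simp add: Lneg_def negvars_def der_empty_iff)
  qed (rule Lneg_subst_stable_closed[OF assms])
qed

theorem lemma4p7:
  fixes L :: "form set" and \<phi> :: form
  assumes "intermediate_logic L"
    and "ND \<subseteq> L"
    and "consistent (Lneg L) \<phi>"
  shows "Iff \<phi> (Neg (Neg \<phi>)) \<in> Lneg L
     \<longleftrightarrow> projective (Lneg L) {s. stable (Lneg L) s} \<phi>"
proof -
  interpret negative_theory "Lneg L"
    using assms(1) by (rule Lneg_negative_theory)
  show ?thesis
    using stable_imp_projective[OF assms(3)] projective_imp_stable by blast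
qed

end
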